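(* Let $L\subset L(p,1)$ be a framed oriented link with diagram $D$ as in the setup, and let $R(D)$ be its augmented fundamental rack with the presentation $[\{x_1,\dots,x_{m+d}\},\{a\}:\{\text{crossing relations},\ x_i^a=x_{m+i}\ (1\le i\le d)\},\{a^p\equiv x_d^{\epsilon_d}\cdots x_1^{\epsilon_1}\}]$ if $d>0$, resp. $[\{x_1,\dots,x_m\},\{a\}:\{\text{crossing relations}\},\{a^p\equiv1\}]$ if $d=0$. Define $A\colon R(D)\to R(D)$ by $A(x)=x^a$ and $F\colon R(D)\to R(D)$ by $F(x)=x\triangleright x_d^{\epsilon_d}\triangleright\cdots\triangleright x_1^{\epsilon_1}$ if $d>0$ and $F(x)=x$ if $d=0$. Then $A$ and $F$ are rack automorphisms of $R(D)$ (bijections satisfying $\phi(x\triangleright y)=\phi(x)\triangleright\phi(y)$), and $A^p=F$.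
   Context: A rack is a nonempty set with a binary operation $\triangleright$ such that (R1) for all $x,y$ there is a unique $z$ with $z\triangleright y=x$, and (R2) $(x\triangleright y)\triangleright z=(x\triangleright z)\triangleright(y\triangleright z)$. Write $t\triangleright\overline y$ for the unique $z$ with $z\triangleright y=t$, and $t\triangleright y^{1}=t\triangleright y$, $t\triangleright y^{-1}=t\triangleright\overline y$; iterated expressions $t\triangleright y_1\triangleright\cdots\triangleright y_r$ are parenthesized from the left. Racks given by presentations $[S_P,S_O:R_P,R_O]$ are quotients of the extended free rack $FR(S_P,S_O)$ (underlying set $S_P\times F(S_P\cup S_O)$, elements $s^w$, group $F(S_P\cup S_O)$ acting by right multiplication on exponents, $s^w\triangleright c^z=s^{wz^{-1}cz}$) by the smallest congruence identifying $x\sim y$ and $z\triangleright x\sim z\triangleright y$ for primary relations $x=y$, and $z^u\sim z^v$ for operator relations $u\equiv v$; the operator group acts on itself by conjugation. Setup: $L(p,1)$ is $p$-surgery on an unknot $U\subset S^3$ drawn with $p$ positive kinks; the diagram $D$ of $L\cup U$ has $d\ge 0$ strands of $L$ passing through the disk bounded by $U$, $m$ crossings with both strands in $L$, arcs of $L$ labelled $x_1,\dots,x_{m+d}$ where for $i\le d$ the arc $x_i$ becomes $x_{m+i}$ upon passing under the arc $a$ of $U$; $\epsilon_i\in\{\pm1\}$ is $1$ if $x_i$ follows $x_{m+i}$ in the orientation of $L$ and $-1$ otherwise; crossing relations are $x_i\triangleright x_j=x_l$ for over-arc $x_j$, under-arc $x_i$ on its right and $x_l$ on its left. *)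

theory Defs
  imports Main
begin

text \<open>Generators of the free group F(S_P \<union> S_O): primary generators x_i (indexed by
  natural numbers) and the single operator generator a.\<close>
datatype gen = PGen nat | OpA

text \<open>A letter is a generator with a sign (True = exponent +1, False = exponent -1);
  words represent elements of the free group (modulo free reduction, which is part
  of the congruence below).\<close>
type_synonym letter = "gen \<times> bool"
type_synonym word = "letter list"

text \<open>Element s^w of the extended free rack FR(S_P,S_O): pair (s, w).\<close>
type_synonym fr_elt = "nat \<times> word"

definition inv_word :: "word \<Rightarrow> word" where
  "inv_word w = rev (map (\<lambda>(g,b). (g, \<not> b)) w)"

definition fr_act :: "fr_elt \<Rightarrow> word \<Rightarrow> fr_elt" where
  "fr_act x g = (fst x, snd x @ g)"

text \<open>s^w \<triangleright> c^z = s^(w z^-1 c z)\<close>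
definition fr_op :: "fr_elt \<Rightarrow> fr_elt \<Rightarrow> fr_elt" where
  "fr_op x y = (fst x, snd x @ inv_word (snd y) @ [(PGen (fst y), True)] @ snd y)"

definition fr_opinv :: "fr_elt \<Rightarrow> fr_elt \<Rightarrow> fr_elt" where
  "fr_opinv x y = (fst x, snd x @ inv_word (snd y) @ [(PGen (fst y), False)] @ snd y)"

fun letter_ok :: "nat \<Rightarrow> letter \<Rightarrow> bool" where
  "letter_ok n (PGen j, b) = (1 \<le> j \<and> j \<le> n)"
| "letter_ok n (OpA, b) = True"

definition word_ok :: "nat \<Rightarrow> word \<Rightarrow> bool" where
  "word_ok n w = (\<forall>l\<in>set w. letter_ok n l)"

definition FRc :: "nat \<Rightarrow> fr_elt set" where
  "FRc n = {(s,w). 1 \<le> s \<and> s \<le> n \<and> word_ok n w}"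

text \<open>The smallest congruence on FR({x_1..x_n},{a}) generated by the primary relations P
  and the operator relations Q (as in Fenn--Rourke: compatible with both rack
  operations and with the action of the free group; includes free reduction of exponents).\<close>
inductive_set pres_rel :: "nat \<Rightarrow> (fr_elt \<times> fr_elt) set \<Rightarrow> (word \<times> word) set
     \<Rightarrow> (fr_elt \<times> fr_elt) set"
  for n :: nat and P :: "(fr_elt \<times> fr_elt) set" and Q :: "(word \<times> word) set" where
  refl: "x \<in> FRc n \<Longrightarrow> (x, x) \<in> pres_rel n P Q"
| sym: "(x, y) \<in> pres_rel n P Q \<Longrightarrow> (y, x) \<in> pres_rel n P Q"
| trans: "(x, y) \<in> pres_rel n P Q \<Longrightarrow> (y, z) \<in> pres_rel n P Q \<Longrightarrow> (x, z) \<in> pres_rel n P Q"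
| freered: "(s, w1 @ [(g, b), (g, \<not> b)] @ w2) \<in> FRc n \<Longrightarrow>
      ((s, w1 @ [(g, b), (g, \<not> b)] @ w2), (s, w1 @ w2)) \<in> pres_rel n P Q"
| prim: "(x, y) \<in> P \<Longrightarrow> x \<in> FRc n \<Longrightarrow> y \<in> FRc n \<Longrightarrow> (x, y) \<in> pres_rel n P Q"
| oper: "z \<in> FRc n \<Longrightarrow> (u, v) \<in> Q \<Longrightarrow> word_ok n u \<Longrightarrow> word_ok n v \<Longrightarrow>
      (fr_act z u, fr_act z v) \<in> pres_rel n P Q"
| op_left: "(x, y) \<in> pres_rel n P Q \<Longrightarrow> z \<in> FRc n \<Longrightarrow>
      (fr_op x z, fr_op y z) \<in> pres_rel n P Q"
| op_right: "(x, y) \<in> pres_rel n P Q \<Longrightarrow> z \<in> FRc n \<Longrightarrow>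
      (fr_op z x, fr_op z y) \<in> pres_rel n P Q"
| opinv_left: "(x, y) \<in> pres_rel n P Q \<Longrightarrow> z \<in> FRc n \<Longrightarrow>
      (fr_opinv x z, fr_opinv y z) \<in> pres_rel n P Q"
| opinv_right: "(x, y) \<in> pres_rel n P Q \<Longrightarrow> z \<in> FRc n \<Longrightarrow>
      (fr_opinv z x, fr_opinv z y) \<in> pres_rel n P Q"
| act: "(x, y) \<in> pres_rel n P Q \<Longrightarrow> letter_ok n l \<Longrightarrow>
      (fr_act x [l], fr_act y [l]) \<in> pres_rel n P Q"

text \<open>Primary relations: crossing relations x_i \<triangleright> x_j = x_l for (i,j,l) \<in> C,
  and x_i^a = x_{m+i} for 1 \<le> i \<le> d.  (Generator x_k is the element (k, []).)\<close>
definition RD_prim :: "nat \<Rightarrow> nat \<Rightarrow> (nat \<times> nat \<times> nat) set \<Rightarrow> (fr_elt \<times> fr_elt) set" where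
  "RD_prim m d C =
     {(fr_op (i, []) (j, []), (l, [])) | i j l. (i, j, l) \<in> C}
   \<union> {(fr_act (i, []) [(OpA, True)], (m + i, [])) | i. 1 \<le> i \<and> i \<le> d}"

definition eps_word :: "nat \<Rightarrow> (nat \<Rightarrow> int) \<Rightarrow> word" where
  "eps_word d eps = map (\<lambda>i. (PGen i, eps i = 1)) (rev [1..<d+1])"

definition RD_oper :: "nat \<Rightarrow> nat \<Rightarrow> (nat \<Rightarrow> int) \<Rightarrow> (word \<times> word) set" where
  "RD_oper p d eps = {(replicate p (OpA, True), eps_word d eps)}"

definition RD_rel :: "nat \<Rightarrow> nat \<Rightarrow> nat \<Rightarrow> (nat \<times> nat \<times> nat) set \<Rightarrow> (nat \<Rightarrow> int)
    \<Rightarrow> (fr_elt \<times> fr_elt) set" where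
  "RD_rel p m d C eps = pres_rel (m + d) (RD_prim m d C) (RD_oper p d eps)"

definition A_map :: "fr_elt \<Rightarrow> fr_elt" where
  "A_map x = fr_act x [(OpA, True)]"

definition F_map :: "nat \<Rightarrow> (nat \<Rightarrow> int) \<Rightarrow> fr_elt \<Rightarrow> fr_elt" where
  "F_map d eps x =
     foldl (\<lambda>y i. if eps i = 1 then fr_op y (i, []) else fr_opinv y (i, [])) x (rev [1..<d+1])"

text \<open>f induces a rack automorphism of the quotient K / R (R an equivalence relation
  on K, op the rack operation on representatives): f is well defined on classes,
  preserves the operation, and the induced map on classes is bijective.\<close>
definition induces_rack_aut ::
  "'a set \<Rightarrow> ('a \<times> 'a) set \<Rightarrow> ('a \<Rightarrow> 'a \<Rightarrow> 'a) \<Rightarrow> ('a \<Rightarrow> 'a) \<Rightarrow> bool" where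
  "induces_rack_aut K R op f \<longleftrightarrow>
     (\<forall>x\<in>K. f x \<in> K)
   \<and> (\<forall>x y. (x, y) \<in> R \<longrightarrow> (f x, f y) \<in> R)
   \<and> (\<forall>x\<in>K. \<forall>y\<in>K. (f (op x y), op (f x) (f y)) \<in> R)
   \<and> (\<forall>x\<in>K. \<forall>y\<in>K. (f x, f y) \<in> R \<longrightarrow> (x, y) \<in> R)
   \<and> (\<forall>y\<in>K. \<exists>x\<in>K. (f x, y) \<in> R)"

end

theory Submission
  imports Defs
begin

text \<open>Both A and F are right multiplication of exponents by a fixed word (a, resp.
  x_d^{eps_d} ... x_1^{eps_1}).  Right multiplication by any word u respects the congruence,
  and it respects the rack operation because the exponent of the right operand enters
  only in the conjugated form z^-1 c z, so the inserted u u^-1 freely cancels; right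
  multiplication by u^-1 inverts it up to free reduction.  Finally A^p multiplies by a^p,
  which is identified with the word of F by the operator relation.\<close>

lemma letter_ok_change_sign: "letter_ok n (g, b) = letter_ok n (g, c)"
  by (cases g) auto

lemma inv_word_Nil [simp]: "inv_word [] = []"
  by (simp add: inv_word_def)

lemma inv_word_Cons [simp]: "inv_word ((g, b) # u) = inv_word u @ [(g, \<not> b)]"
  by (simp add: inv_word_def)

lemma inv_word_inv_word [simp]: "inv_word (inv_word u) = u"
  by (simp add: inv_word_def rev_map comp_def case_prod_unfold)

lemma word_ok_Nil [simp]: "word_ok n []"
  by (simp add: word_ok_def)

lemma word_ok_Cons [simp]: "word_ok n (l # v) \<longleftrightarrow> letter_ok n l \<and> word_ok n v"
  by (simp add: word_ok_def)

lemma word_ok_append [simp]: "word_ok n (u @ v) \<longleftrightarrow> word_ok n u \<and> word_ok n v"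
  by (auto simp: word_ok_def)

lemma word_ok_inv_word [simp]: "word_ok n (inv_word u) = word_ok n u"
proof (induction u)
  case (Cons l u)
  then show ?case
    by (cases l) (metis inv_word_Cons letter_ok_change_sign word_ok_Cons word_ok_Nil word_ok_append)
qed simp

lemma fr_act_fr_act [simp]: "fr_act (fr_act x u) v = fr_act x (u @ v)"
  by (simp add: fr_act_def)

lemma fr_act_in_FRc: "x \<in> FRc n \<Longrightarrow> word_ok n u \<Longrightarrow> fr_act x u \<in> FRc n"
  by (auto simp: FRc_def fr_act_def)

lemma pres_rel_cancel_inv_word:
  "(s, w1 @ u @ inv_word u @ w2) \<in> FRc n \<Longrightarrow>
   ((s, w1 @ u @ inv_word u @ w2), (s, w1 @ w2)) \<in> pres_rel n P Q"
proof (induction u arbitrary: w1 w2)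
  case Nil
  then show ?case by (simp add: pres_rel.refl)
next
  case (Cons l u)
  obtain g b where l: "l = (g, b)" by (cases l)
  have "((s, (w1 @ [l]) @ u @ inv_word u @ ([(g, \<not> b)] @ w2)),
         (s, (w1 @ [l]) @ [(g, \<not> b)] @ w2)) \<in> pres_rel n P Q"
    using Cons.IH[of "w1 @ [l]" "[(g, \<not> b)] @ w2"] Cons.prems by (simp add: l)
  moreover have "(s, w1 @ [(g, b), (g, \<not> b)] @ w2) \<in> FRc n"
    using Cons.prems by (auto simp: FRc_def l letter_ok_change_sign[of n g b "\<not> b"])
  ultimately show ?case
    using pres_rel.trans pres_rel.freered by (fastforce simp: l)
qed

lemma pres_rel_fr_act_inv_word:
  assumes "x \<in> FRc n" and "word_ok n u"
  shows "(fr_act x (u @ inv_word u), x) \<in> pres_rel n P Q"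
  using assms pres_rel_cancel_inv_word[of "fst x" "snd x" u "[]" n P Q]
  by (simp add: fr_act_def FRc_def case_prod_unfold)

lemma pres_rel_fr_act:
  "(x, y) \<in> pres_rel n P Q \<Longrightarrow> word_ok n u \<Longrightarrow> (fr_act x u, fr_act y u) \<in> pres_rel n P Q"
proof (induction u rule: rev_induct)
  case Nil
  then show ?case by (simp add: fr_act_def)
next
  case (snoc l u)
  then have "(fr_act (fr_act x u) [l], fr_act (fr_act y u) [l]) \<in> pres_rel n P Q"
    by (intro pres_rel.act) auto
  then show ?case by simp
qed

lemma pres_rel_fr_act_fr_op:
  assumes "x \<in> FRc n" and "y \<in> FRc n" and "word_ok n u"
  shows "(fr_act (fr_op x y) u, fr_op (fr_act x u) (fr_act y u)) \<in> pres_rel n P Q"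
proof -
  obtain s w t z where xy: "x = (s, w)" "y = (t, z)" by fastforce
  let ?conj = "inv_word z @ [(PGen t, True)] @ z @ u"
  have "fr_op (fr_act x u) (fr_act y u) = (s, w @ u @ inv_word u @ ?conj)"
    by (simp add: xy fr_op_def fr_act_def inv_word_def)
  moreover have "fr_act (fr_op x y) u = (s, w @ ?conj)"
    by (simp add: xy fr_op_def fr_act_def)
  moreover have "(s, w @ u @ inv_word u @ ?conj) \<in> FRc n"
    using assms by (auto simp: FRc_def xy)
  ultimately show ?thesis
    using pres_rel_cancel_inv_word pres_rel.sym by metis
qed

lemma induces_rack_aut_fr_act:
  assumes u: "word_ok n u"
  shows "induces_rack_aut (FRc n) (pres_rel n P Q) fr_op (\<lambda>x. fr_act x u)"
  unfolding induces_rack_aut_def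
proof (intro conjI ballI allI impI)
  fix x y
  assume x: "x \<in> FRc n" and y: "y \<in> FRc n"
    and "(fr_act x u, fr_act y u) \<in> pres_rel n P Q"
  then have "(fr_act x (u @ inv_word u), fr_act y (u @ inv_word u)) \<in> pres_rel n P Q"
    using pres_rel_fr_act[of _ _ n P Q "inv_word u"] u by fastforce
  then show "(x, y) \<in> pres_rel n P Q"
    using pres_rel_fr_act_inv_word[OF x u] pres_rel_fr_act_inv_word[OF y u]
    by (meson pres_rel.sym pres_rel.trans)
next
  fix y
  assume y: "y \<in> FRc n"
  have "(fr_act (fr_act y (inv_word u)) u, y) \<in> pres_rel n P Q"
    using pres_rel_fr_act_inv_word[OF y, of "inv_word u"] u by simp
  then show "\<exists>x\<in>FRc n. (fr_act x u, y) \<in> pres_rel n P Q"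
    using y u by (intro bexI[of _ "fr_act y (inv_word u)"]) (auto intro: fr_act_in_FRc)
qed (use u in \<open>auto intro: fr_act_in_FRc pres_rel_fr_act pres_rel_fr_act_fr_op\<close>)

lemma A_map_eq_fr_act: "A_map = (\<lambda>x. fr_act x [(OpA, True)])"
  by (simp add: A_map_def fun_eq_iff)

lemma funpow_A_map: "(A_map ^^ k) x = fr_act x (replicate k (OpA, True))"
  by (induction k) (auto simp: A_map_def fr_act_def replicate_append_same[symmetric])

lemma F_map_eq_fr_act: "F_map d eps = (\<lambda>x. fr_act x (eps_word d eps))"
proof -
  have "foldl (\<lambda>y i. if eps i = 1 then fr_op y (i, []) else fr_opinv y (i, [])) x ns
        = fr_act x (map (\<lambda>i. (PGen i, eps i = 1)) ns)" for x ns
    by (induction ns arbitrary: x) (auto simp: fr_op_def fr_opinv_def fr_act_def)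
  then show ?thesis
    by (simp add: fun_eq_iff F_map_def eps_word_def)
qed

lemma word_ok_eps_word: "word_ok (m + d) (eps_word d eps)"
  by (auto simp: eps_word_def word_ok_def)

theorem lemma2:
  fixes p m d :: nat and C :: "(nat \<times> nat \<times> nat) set" and eps :: "nat \<Rightarrow> int"
  assumes "p \<ge> 1"
    and "\<forall>(i, j, l) \<in> C. i \<in> {1..m+d} \<and> j \<in> {1..m+d} \<and> l \<in> {1..m+d}"
    and "\<forall>i\<in>{1..d}. eps i = 1 \<or> eps i = -1"
  shows "induces_rack_aut (FRc (m + d)) (RD_rel p m d C eps) fr_op A_map
       \<and> induces_rack_aut (FRc (m + d)) (RD_rel p m d C eps) fr_op (F_map d eps)
       \<and> (\<forall>x\<in>FRc (m + d). ((A_map ^^ p) x, F_map d eps x) \<in> RD_rel p m d C eps)"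
proof (intro conjI ballI)
  show "induces_rack_aut (FRc (m + d)) (RD_rel p m d C eps) fr_op A_map"
    unfolding RD_rel_def A_map_eq_fr_act by (rule induces_rack_aut_fr_act) simp
  show "induces_rack_aut (FRc (m + d)) (RD_rel p m d C eps) fr_op (F_map d eps)"
    unfolding RD_rel_def F_map_eq_fr_act by (rule induces_rack_aut_fr_act[OF word_ok_eps_word])
  fix x
  assume "x \<in> FRc (m + d)"
  then show "((A_map ^^ p) x, F_map d eps x) \<in> RD_rel p m d C eps"
    unfolding RD_rel_def F_map_eq_fr_act funpow_A_map
    by (rule pres_rel.oper) (auto simp: RD_oper_def word_ok_eps_word, auto simp: word_ok_def)
qed

end
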